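(* Let $n\ge 2$ and let $S_1$ and $S_2$ be two disjoint sets of cells of an $n\times n$ array, each of which forms a Hamilton cycle. Then the cells of $S_1\cup S_2$ can be filled with the integers $1,2,\dots,4n$, each used exactly once, so that in every row and every column the sum of the filled entries equals $8n+2$.
   Context: Rows and columns of an $n\times n$ array are indexed by $\{1,\dots,n\}$. Cells are identified with edges of the complete bipartite graph $K_{n,n}$ with parts $\{a_1,\dots,a_n\}$ and $\{b_1,\dots,b_n\}$, cell $(i,j)$ corresponding to edge $\{a_i,b_j\}$. A set of cells forms a Hamilton cycle if the corresponding edge set is a single cycle of length $2n$ in $K_{n,n}$. (Thus each such set has exactly two cells in each row and in each column.) *)

theory Defs
  imports Main
begin

text \<open>Cells of the n x n array are pairs (i,j) with 1 \<le> i,j \<le> n.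
  Vertices of K_{n,n}: Inl i stands for a_i, Inr j stands for b_j.
  Cell (i,j) corresponds to the edge {a_i, b_j}.\<close>

definition cells :: "nat \<Rightarrow> (nat \<times> nat) set" where
  "cells n = {1..n} \<times> {1..n}"

definition cell_edge :: "nat \<times> nat \<Rightarrow> (nat + nat) set" where
  "cell_edge c = {Inl (fst c), Inr (snd c)}"

definition knn_vertices :: "nat \<Rightarrow> (nat + nat) set" where
  "knn_vertices n = Inl ` {1..n} \<union> Inr ` {1..n}"

definition hamilton_cycle :: "nat \<Rightarrow> (nat \<times> nat) set \<Rightarrow> bool" where
  "hamilton_cycle n S \<longleftrightarrow> S \<subseteq> cells n \<and>
     (\<exists>vs :: (nat + nat) list.
        length vs = 2 * n \<and> distinct vs \<and> set vs = knn_vertices n \<and>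
        cell_edge ` S = {{vs ! k, vs ! ((k + 1) mod (2 * n))} | k. k < 2 * n})"

end

theory Submission
  imports Defs
begin

text \<open>Walk along a Hamilton cycle starting at \<open>a\<^sub>1\<close> and number its cells \<open>0, \<dots>, 2n - 1\<close>
  in the order of traversal. Rows then sit at the even positions of the walk and columns at the
  odd ones, and the vertex at position \<open>p\<close> carries the cells numbered \<open>p - 1\<close> and \<open>p\<close>
  (cyclically). Label the cells of \<open>S\<^sub>1\<close> in this order by \<open>n, n + 1, n - 1, n + 2, \<dots>, 1, 2n\<close>
  and those of \<open>S\<^sub>2\<close> by \<open>2n + 1, 4n, 2n + 2, 4n - 1, \<dots>\<close>. At a vertex the two
  \<open>S\<^sub>1\<close>-labels sum to \<open>2n\<close> (rows), \<open>2n + 1\<close> (columns) or \<open>3n\<close> (\<open>a\<^sub>1\<close>), and the two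
  \<open>S\<^sub>2\<close>-labels to \<open>6n + 2\<close>, \<open>6n + 1\<close> or \<open>5n + 2\<close> respectively, so every line sum is
  \<open>8n + 2\<close>.\<close>

definition cycle_edge :: "'a list \<Rightarrow> nat \<Rightarrow> 'a set" where
  "cycle_edge vs k = {vs ! k, vs ! (Suc k mod length vs)}"

lemma cycle_edge_rotate:
  assumes "k < length vs"
  shows "cycle_edge (rotate m vs) k = cycle_edge vs ((m + k) mod length vs)"
proof -
  have "(m + Suc k mod length vs) mod length vs = Suc ((m + k) mod length vs) mod length vs"
    by (simp add: mod_add_right_eq mod_Suc_eq)
  moreover have "Suc k mod length vs < length vs"
    using assms by (intro mod_less_divisor) linarith
  ultimately show ?thesis
    using assms by (simp add: cycle_edge_def nth_rotate)
qed

lemma image_add_mod_lessThan: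
  "(\<lambda>k. (m + k) mod L) ` {..<L} = {..<(L::nat)}"
proof (cases "L = 0")
  case False
  have "k' \<in> (\<lambda>k. (m + k) mod L) ` {..<L}" if "k' < L" for k'
  proof
    have "m + (k' + L - m mod L) = k' + L + m div L * L"
      using mod_less_divisor[of L m] div_mult_mod_eq[of m L] False by linarith
    then show "k' = (m + (k' + L - m mod L) mod L) mod L"
      using that by (simp add: mod_add_right_eq)
  qed (use False in simp)
  then show ?thesis using False by auto
qed simp

lemma cycle_edge_image_rotate:
  "cycle_edge (rotate m vs) ` {..<length vs} = cycle_edge vs ` {..<length vs}"
proof -
  have "cycle_edge (rotate m vs) ` {..<length vs} = cycle_edge vs ` (\<lambda>k. (m + k) mod length vs) ` {..<length vs}"
    by (auto simp: cycle_edge_rotate image_image intro!: image_cong)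
  then show ?thesis by (simp only: image_add_mod_lessThan)
qed

lemma mem_cycle_edge_iff:
  assumes "distinct vs" "q < length vs" "k < length vs"
  shows "vs ! q \<in> cycle_edge vs k \<longleftrightarrow> k = q \<or> Suc k mod length vs = q"
proof -
  have "Suc k mod length vs < length vs"
    using assms(3) by (intro mod_less_divisor) linarith
  then show ?thesis
    using assms by (auto simp: cycle_edge_def nth_eq_iff_index_eq)
qed

definition cyclic_pred :: "nat \<Rightarrow> nat \<Rightarrow> nat" where
  "cyclic_pred L q = (if q = 0 then L - 1 else q - 1)"

lemma cycle_edges_at_nth:
  assumes "distinct vs" "q < length vs"
  shows "{k. k < length vs \<and> vs ! q \<in> cycle_edge vs k} = {q, cyclic_pred (length vs) q}"
proof -
  have "Suc k mod length vs = q \<longleftrightarrow> k = cyclic_pred (length vs) q"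
    if "k < length vs" for k
    using that assms(2) by (auto simp: mod_Suc cyclic_pred_def)
  then show ?thesis
    using assms by (auto simp: mem_cycle_edge_iff cyclic_pred_def)
qed

lemma inj_on_cycle_edge:
  assumes "distinct vs" "3 \<le> length vs"
  shows "inj_on (cycle_edge vs) {..<length vs}"
proof (rule inj_onI)
  fix k k' assume k: "k \<in> {..<length vs}" "k' \<in> {..<length vs}"
    and eq: "cycle_edge vs k = cycle_edge vs k'"
  have "vs ! k \<in> cycle_edge vs k'" "vs ! k' \<in> cycle_edge vs k"
    using eq by (auto simp: cycle_edge_def)
  then have "k' = k \<or> Suc k' mod length vs = k" "k = k' \<or> Suc k mod length vs = k'"
    using k assms(1) by (simp_all add: mem_cycle_edge_iff)
  then show "k = k'"
    using k assms(2) by (auto simp: mod_Suc split: if_splits)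
qed

lemma isl_nth_iff_even:
  assumes "\<And>k. k < length vs \<Longrightarrow> \<exists>a b. cycle_edge vs k = {Inl a, Inr b}"
    and "isl (vs ! 0)" and "k < length vs"
  shows "isl (vs ! k) \<longleftrightarrow> even k"
  using assms(3)
proof (induction k)
  case (Suc k)
  then obtain a b where "{vs ! k, vs ! Suc k} = {Inl a, Inr b}"
    using assms(1)[of k] by (auto simp: cycle_edge_def)
  then have "isl (vs ! Suc k) \<longleftrightarrow> \<not> isl (vs ! k)"
    by (auto simp: doubleton_eq_iff)
  with Suc show ?case by simp
qed (simp add: assms(2))

lemma inj_cell_edge: "inj cell_edge"
  by (rule injI) (auto simp: cell_edge_def doubleton_eq_iff prod_eq_iff)

lemma hamilton_cycle_finite:
  assumes "hamilton_cycle n S"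
  shows "finite S"
proof (rule finite_subset)
  show "S \<subseteq> cells n"
    using assms by (simp add: hamilton_cycle_def)
qed (simp add: cells_def)

lemma hamilton_cycle_from_vertex:
  assumes "hamilton_cycle n S" "v \<in> knn_vertices n"
  obtains vs where "length vs = 2 * n" "distinct vs" "set vs = knn_vertices n" "vs ! 0 = v"
    "cell_edge ` S = cycle_edge vs ` {..<2 * n}"
proof -
  obtain ws where ws: "length ws = 2 * n" "distinct ws" "set ws = knn_vertices n"
    "cell_edge ` S = {{ws ! k, ws ! ((k + 1) mod (2 * n))} | k. k < 2 * n}"
    using assms(1) unfolding hamilton_cycle_def by blast
  then have edges: "cell_edge ` S = cycle_edge ws ` {..<length ws}"
    by (auto simp: cycle_edge_def)
  obtain p where p: "p < length ws" "ws ! p = v"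
    using assms(2) ws(3) by (metis in_set_conv_nth)
  show thesis
  proof
    show "rotate p ws ! 0 = v"
      using p nth_rotate[of 0 ws p] by (cases ws) auto
    show "cell_edge ` S = cycle_edge (rotate p ws) ` {..<2 * n}"
      using edges ws(1) cycle_edge_image_rotate[of p ws] by simp
  qed (use ws in auto)
qed

definition cycle_numbering :: "nat \<Rightarrow> (nat \<times> nat) set \<Rightarrow> (nat \<times> nat \<Rightarrow> nat) \<Rightarrow> bool" where
  "cycle_numbering n S idx \<longleftrightarrow> bij_betw idx S {..<2 * n} \<and>
     (\<forall>v \<in> knn_vertices n. \<exists>p<2 * n. (p = 0 \<longleftrightarrow> v = Inl 1) \<and> (even p \<longleftrightarrow> isl v) \<and>
        idx ` {c \<in> S. v \<in> cell_edge c} = {p, cyclic_pred (2 * n) p})"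

lemma hamilton_cycle_numbering:
  assumes "2 \<le> n" "hamilton_cycle n S"
  obtains idx where "cycle_numbering n S idx"
proof -
  have "Inl 1 \<in> knn_vertices n"
    using assms(1) by (simp add: knn_vertices_def)
  then obtain vs where vs: "length vs = 2 * n" "distinct vs" "set vs = knn_vertices n"
    "vs ! 0 = Inl 1" "cell_edge ` S = cycle_edge vs ` {..<2 * n}"
    using hamilton_cycle_from_vertex[OF assms(2)] by blast
  let ?E = "cycle_edge vs"
  have inj_E: "inj_on ?E {..<2 * n}"
    using inj_on_cycle_edge[of vs] vs(1,2) assms(1) by simp
  define idx where "idx = the_inv_into {..<2 * n} ?E \<circ> cell_edge"
  have bij: "bij_betw idx S {..<2 * n}"
    unfolding idx_def
  proof (rule bij_betw_trans)
    show "bij_betw cell_edge S (cell_edge ` S)"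
      using inj_cell_edge by (simp add: bij_betw_def inj_on_subset[of _ UNIV])
    show "bij_betw (the_inv_into {..<2 * n} ?E) (cell_edge ` S) {..<2 * n}"
      using inj_E vs(5) by (simp add: bij_betw_the_inv_into inj_on_imp_bij_betw)
  qed
  have idx_incident: "idx ` {c \<in> S. v \<in> cell_edge c} = {k. k < 2 * n \<and> v \<in> ?E k}" for v
  proof (intro equalityI subsetI)
    fix k assume "k \<in> idx ` {c \<in> S. v \<in> cell_edge c}"
    then obtain c where c: "c \<in> S" "v \<in> cell_edge c" "k = idx c" by blast
    have "?E k = cell_edge c"
      using c f_the_inv_into_f[OF inj_E, of "cell_edge c"] vs(5) by (auto simp: idx_def)
    then show "k \<in> {k. k < 2 * n \<and> v \<in> ?E k}"
      using c bij_betw_apply[OF bij] by simp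
  next
    fix k assume k: "k \<in> {k. k < 2 * n \<and> v \<in> ?E k}"
    then have "?E k \<in> cell_edge ` S"
      using vs(5) by simp
    then obtain c where c: "c \<in> S" "cell_edge c = ?E k"
      by auto
    then have "idx c = k"
      using k the_inv_into_f_f[OF inj_E] by (simp add: idx_def)
    then show "k \<in> idx ` {c \<in> S. v \<in> cell_edge c}"
      using c k by force
  qed
  have sides: "\<exists>a b. ?E k = {Inl a, Inr b}" if "k < length vs" for k
  proof -
    have "?E k \<in> cell_edge ` S"
      using that vs(1,5) by simp
    then show ?thesis
      by (auto simp: cell_edge_def)
  qed
  have "\<exists>p<2 * n. (p = 0 \<longleftrightarrow> v = Inl 1) \<and> (even p \<longleftrightarrow> isl v) \<and>
      idx ` {c \<in> S. v \<in> cell_edge c} = {p, cyclic_pred (2 * n) p}"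
    if v: "v \<in> knn_vertices n" for v
  proof -
    obtain p where p: "p < 2 * n" "vs ! p = v"
      using v vs(1,3) by (metis in_set_conv_nth)
    have "p = 0 \<longleftrightarrow> v = Inl 1"
      using nth_eq_iff_index_eq[OF vs(2), of p 0] p vs(1,4) assms(1) by auto
    moreover have "even p \<longleftrightarrow> isl v"
      using isl_nth_iff_even[OF sides, of p] p vs(1,4) by simp
    moreover have "idx ` {c \<in> S. v \<in> cell_edge c} = {p, cyclic_pred (2 * n) p}"
      using idx_incident[of v] cycle_edges_at_nth[of vs p] p vs(1,2) by simp
    ultimately show ?thesis
      using p(1) by blast
  qed
  with bij have "cycle_numbering n S idx"
    by (simp add: cycle_numbering_def)
  then show thesis
    by (rule that)
qed

lemma cycle_numbering_incident_sum:
  assumes "cycle_numbering n S idx" "v \<in> knn_vertices n"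
  obtains p where "p < 2 * n" "p = 0 \<longleftrightarrow> v = Inl 1" "even p \<longleftrightarrow> isl v"
    "\<And>g. (\<Sum>c | c \<in> S \<and> v \<in> cell_edge c. g (idx c)) = g p + g (cyclic_pred (2 * n) p)"
proof -
  obtain p where p: "p < 2 * n" "p = 0 \<longleftrightarrow> v = Inl 1" "even p \<longleftrightarrow> isl v"
    and image: "idx ` {c \<in> S. v \<in> cell_edge c} = {p, cyclic_pred (2 * n) p}"
    using assms by (auto simp: cycle_numbering_def)
  have inj: "inj_on idx {c \<in> S. v \<in> cell_edge c}"
    using assms(1) by (auto simp: cycle_numbering_def bij_betw_def inj_on_def)
  have "(\<Sum>c | c \<in> S \<and> v \<in> cell_edge c. g (idx c)) = g p + g (cyclic_pred (2 * n) p)" for g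
  proof -
    have "(\<Sum>c | c \<in> S \<and> v \<in> cell_edge c. g (idx c)) = (\<Sum>k \<in> {p, cyclic_pred (2 * n) p}. g k)"
      using sum.reindex[OF inj, of g] image by simp
    then show ?thesis
      using p(1) by (auto simp: cyclic_pred_def)
  qed
  with p that show thesis
    by blast
qed

definition small_label :: "nat \<Rightarrow> nat \<Rightarrow> nat" where
  "small_label n k = (if even k then n - k div 2 else n + 1 + k div 2)"

definition large_label :: "nat \<Rightarrow> nat \<Rightarrow> nat" where
  "large_label n k = (if even k then 2 * n + 1 + k div 2 else 4 * n - k div 2)"

lemma bij_betw_small_label: "bij_betw (small_label n) {..<2 * n} {1..2 * n}"
proof -
  have "small_label n ` {..<2 * n} = {1..2 * n}"
  proof (intro equalityI subsetI)
    fix v assume v: "v \<in> {1..2 * n}"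
    show "v \<in> small_label n ` {..<2 * n}"
    proof (cases "v \<le> n")
      case True
      then have "v = small_label n (2 * (n - v))" "2 * (n - v) < 2 * n"
        using v by (auto simp: small_label_def)
      then show ?thesis by blast
    next
      case False
      then have "v = small_label n (2 * (v - n - 1) + 1)" "2 * (v - n - 1) + 1 < 2 * n"
        using v by (auto simp: small_label_def)
      then show ?thesis by blast
    qed
  qed (auto simp: small_label_def)
  then show ?thesis
    by (simp add: bij_betw_def inj_on_iff_eq_card)
qed

lemma bij_betw_large_label: "bij_betw (large_label n) {..<2 * n} {2 * n + 1..4 * n}"
proof -
  have "large_label n ` {..<2 * n} = {2 * n + 1..4 * n}"
  proof (intro equalityI subsetI)
    fix v assume v: "v \<in> {2 * n + 1..4 * n}"
    show "v \<in> large_label n ` {..<2 * n}"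
    proof (cases "v \<le> 3 * n")
      case True
      then have "v = large_label n (2 * (v - 2 * n - 1))" "2 * (v - 2 * n - 1) < 2 * n"
        using v by (auto simp: large_label_def)
      then show ?thesis by blast
    next
      case False
      then have "v = large_label n (2 * (4 * n - v) + 1)" "2 * (4 * n - v) + 1 < 2 * n"
        using v by (auto simp: large_label_def)
      then show ?thesis by blast
    qed
  qed (auto simp: large_label_def)
  then show ?thesis
    by (simp add: bij_betw_def inj_on_iff_eq_card)
qed

lemma nat_zero_even_odd_cases:
  fixes p :: nat
  obtains "p = 0" | a where "p = 2 * a + 2" | a where "p = 2 * a + 1"
proof (cases "even p")
  case True
  then obtain b where "p = 2 * b" ..
  with that(1,2) show thesis
    by (cases b) auto
next
  case False
  with that(3) show thesis
    by (auto elim: oddE)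
qed

lemma small_label_pair_sum:
  assumes "p < 2 * n"
  shows "small_label n p + small_label n (cyclic_pred (2 * n) p) =
    (if p = 0 then 3 * n else if even p then 2 * n else 2 * n + 1)"
proof -
  from nat_zero_even_odd_cases[of p] show ?thesis
    using assms by cases (auto simp: small_label_def cyclic_pred_def)
qed

lemma large_label_pair_sum:
  assumes "p < 2 * n"
  shows "large_label n p + large_label n (cyclic_pred (2 * n) p) =
    (if p = 0 then 5 * n + 2 else if even p then 6 * n + 2 else 6 * n + 1)"
proof -
  from nat_zero_even_odd_cases[of p] show ?thesis
    using assms by cases (auto simp: large_label_def cyclic_pred_def)
qed

lemma sum_row_eq_sum_incident:
  "(\<Sum>j\<in>{j. (i, j) \<in> S}. f (i, j)) = (\<Sum>c | c \<in> S \<and> Inl i \<in> cell_edge c. f c)"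
proof -
  have "{c. c \<in> S \<and> Inl i \<in> cell_edge c} = Pair i ` {j. (i, j) \<in> S}"
    by (force simp: cell_edge_def)
  then show ?thesis
    by (simp add: sum.reindex inj_on_def)
qed

lemma sum_col_eq_sum_incident:
  "(\<Sum>i\<in>{i. (i, j) \<in> S}. f (i, j)) = (\<Sum>c | c \<in> S \<and> Inr j \<in> cell_edge c. f c)"
proof -
  have "{c. c \<in> S \<and> Inr j \<in> cell_edge c} = (\<lambda>i. (i, j)) ` {i. (i, j) \<in> S}"
    by (force simp: cell_edge_def)
  then show ?thesis
    by (simp add: sum.reindex inj_on_def)
qed

definition combined_label ::
    "nat \<Rightarrow> (nat \<times> nat) set \<Rightarrow> (nat \<times> nat \<Rightarrow> nat) \<Rightarrow> (nat \<times> nat \<Rightarrow> nat) \<Rightarrow> nat \<times> nat \<Rightarrow> nat" where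
  "combined_label n S1 idx1 idx2 c =
     (if c \<in> S1 then small_label n (idx1 c) else large_label n (idx2 c))"

lemma bij_betw_combined_label:
  assumes "cycle_numbering n S1 idx1" "cycle_numbering n S2 idx2" "S1 \<inter> S2 = {}"
  shows "bij_betw (combined_label n S1 idx1 idx2) (S1 \<union> S2) {1..4 * n}"
proof -
  let ?f = "combined_label n S1 idx1 idx2"
  have bij_idx: "bij_betw idx1 S1 {..<2 * n}" "bij_betw idx2 S2 {..<2 * n}"
    using assms(1,2) by (simp_all add: cycle_numbering_def)
  have "bij_betw (small_label n \<circ> idx1) S1 {1..2 * n}"
    using bij_betw_trans[OF bij_idx(1) bij_betw_small_label] .
  moreover have "bij_betw ?f S1 {1..2 * n} \<longleftrightarrow> bij_betw (small_label n \<circ> idx1) S1 {1..2 * n}"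
    by (intro bij_betw_cong) (simp add: combined_label_def)
  moreover have "bij_betw (large_label n \<circ> idx2) S2 {2 * n + 1..4 * n}"
    using bij_betw_trans[OF bij_idx(2) bij_betw_large_label] .
  moreover have "bij_betw ?f S2 {2 * n + 1..4 * n} \<longleftrightarrow> bij_betw (large_label n \<circ> idx2) S2 {2 * n + 1..4 * n}"
    using assms(3) by (intro bij_betw_cong) (auto simp: combined_label_def)
  ultimately have "bij_betw ?f (S1 \<union> S2) ({1..2 * n} \<union> {2 * n + 1..4 * n})"
    by (intro bij_betw_combine) auto
  moreover have "{1..2 * n} \<union> {2 * n + 1..4 * n} = {1..4 * n}"
    by auto
  ultimately show ?thesis
    by simp
qed

lemma combined_label_incident_sum:
  assumes "cycle_numbering n S1 idx1" "cycle_numbering n S2 idx2" "S1 \<inter> S2 = {}"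
    and "finite S1" "finite S2" "v \<in> knn_vertices n"
  shows "(\<Sum>c | c \<in> S1 \<union> S2 \<and> v \<in> cell_edge c. combined_label n S1 idx1 idx2 c) = 8 * n + 2"
proof -
  let ?f = "combined_label n S1 idx1 idx2"
  obtain p where p: "p < 2 * n" "p = 0 \<longleftrightarrow> v = Inl 1" "even p \<longleftrightarrow> isl v"
    and sum1: "\<And>g :: nat \<Rightarrow> nat. (\<Sum>c | c \<in> S1 \<and> v \<in> cell_edge c. g (idx1 c)) = g p + g (cyclic_pred (2 * n) p)"
    using cycle_numbering_incident_sum[OF assms(1,6)] by blast
  obtain q where q: "q < 2 * n" "q = 0 \<longleftrightarrow> v = Inl 1" "even q \<longleftrightarrow> isl v"
    and sum2: "\<And>g :: nat \<Rightarrow> nat. (\<Sum>c | c \<in> S2 \<and> v \<in> cell_edge c. g (idx2 c)) = g q + g (cyclic_pred (2 * n) q)"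
    using cycle_numbering_incident_sum[OF assms(2,6)] by blast
  have "{c. c \<in> S1 \<union> S2 \<and> v \<in> cell_edge c} = {c. c \<in> S1 \<and> v \<in> cell_edge c} \<union> {c. c \<in> S2 \<and> v \<in> cell_edge c}"
    by blast
  then have "(\<Sum>c | c \<in> S1 \<union> S2 \<and> v \<in> cell_edge c. ?f c) =
      (\<Sum>c | c \<in> S1 \<and> v \<in> cell_edge c. ?f c) + (\<Sum>c | c \<in> S2 \<and> v \<in> cell_edge c. ?f c)"
    using assms(3-5) by (simp add: sum.union_disjoint disjoint_iff)
  also have "\<dots> = (\<Sum>c | c \<in> S1 \<and> v \<in> cell_edge c. small_label n (idx1 c))
      + (\<Sum>c | c \<in> S2 \<and> v \<in> cell_edge c. large_label n (idx2 c))"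
    using assms(3) by (auto simp: combined_label_def intro!: sum.cong arg_cong2[where f = "(+)"])
  also have "\<dots> = small_label n p + small_label n (cyclic_pred (2 * n) p)
      + (large_label n q + large_label n (cyclic_pred (2 * n) q))"
    by (simp only: sum1[of "small_label n"] sum2[of "large_label n"])
  also have "\<dots> = 8 * n + 2"
    using p q small_label_pair_sum[of p n] large_label_pair_sum[of q n] by auto
  finally show ?thesis .
qed

theorem lemma2p1:
  fixes n :: nat and S1 S2 :: "(nat \<times> nat) set"
  assumes "n \<ge> 2"
    and "hamilton_cycle n S1" and "hamilton_cycle n S2"
    and "S1 \<inter> S2 = {}"
  shows "\<exists>f :: nat \<times> nat \<Rightarrow> nat.
           bij_betw f (S1 \<union> S2) {1..4 * n} \<and>
           (\<forall>i\<in>{1..n}. (\<Sum>j\<in>{j. (i, j) \<in> S1 \<union> S2}. f (i, j)) = 8 * n + 2) \<and>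
           (\<forall>j\<in>{1..n}. (\<Sum>i\<in>{i. (i, j) \<in> S1 \<union> S2}. f (i, j)) = 8 * n + 2)"
proof -
  obtain idx1 idx2 where num: "cycle_numbering n S1 idx1" "cycle_numbering n S2 idx2"
    using hamilton_cycle_numbering[OF assms(1,2)] hamilton_cycle_numbering[OF assms(1,3)] by metis
  let ?f = "combined_label n S1 idx1 idx2"
  have vertex_sum: "(\<Sum>c | c \<in> S1 \<union> S2 \<and> v \<in> cell_edge c. ?f c) = 8 * n + 2"
    if "v \<in> knn_vertices n" for v
    using combined_label_incident_sum[OF num assms(4) _ _ that]
      hamilton_cycle_finite[OF assms(2)] hamilton_cycle_finite[OF assms(3)] by blast
  have "(\<Sum>j\<in>{j. (i, j) \<in> S1 \<union> S2}. ?f (i, j)) = 8 * n + 2" if "i \<in> {1..n}" for i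
    unfolding sum_row_eq_sum_incident using that by (intro vertex_sum) (auto simp: knn_vertices_def)
  moreover have "(\<Sum>i\<in>{i. (i, j) \<in> S1 \<union> S2}. ?f (i, j)) = 8 * n + 2" if "j \<in> {1..n}" for j
    unfolding sum_col_eq_sum_incident using that by (intro vertex_sum) (auto simp: knn_vertices_def)
  ultimately show ?thesis
    using bij_betw_combined_label[OF num assms(4)] by blast
qed

end
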